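(* Let $p$ be an odd prime, $q\in\mathbb{C}_p$ with $|q-1|_p<1$, $\alpha\in\mathbb{N}\cup\{0\}$, $h\in\mathbb{N}$. For every integer $n\ge0$, \[ \int_{\mathbb{Z}_p}q^{(h-1)(\xi+1)}[1-\xi]_{q^{-\alpha}}^n\,d\mu_{-q}(\xi)=\frac{\widetilde{G}_{n+1,q^{-1}}^{(\alpha,h)}(2)}{n+1}. \]
   Context: For $x\in\mathbb{Z}_p$ write $[x]_q=\frac{1-q^x}{1-q}$. For a uniformly differentiable $f:\mathbb{Z}_p\to\mathbb{C}_p$, the fermionic $p$-adic $q$-integral is $\int_{\mathbb{Z}_p}f(\xi)\,d\mu_{-q}(\xi)=\lim_{N\to\infty}\frac{1}{[p^N]_{-q}}\sum_{\xi=0}^{p^N-1}f(\xi)(-q)^{\xi}$, with $[p^N]_{-q}=\frac{1+q^{p^N}}{1+q}$. The $(h,q)$-Genocchi polynomials with weight $\alpha$ are defined for $n\ge0$, $x\in\mathbb{Z}_p$ by $\frac{\widetilde{G}_{n+1,q}^{(\alpha,h)}(x)}{n+1}=\int_{\mathbb{Z}_p}q^{(h-1)\xi}[x+\xi]_{q^{\alpha}}^n\,d\mu_{-q}(\xi)$. The version with $q^{-1}$ is obtained by replacing $q$ by $q^{-1}$ everywhere: $\frac{\widetilde{G}_{n+1,q^{-1}}^{(\alpha,h)}(x)}{n+1}=\int_{\mathbb{Z}_p}q^{(1-h)\xi}[x+\xi]_{q^{-\alpha}}^n\,d\mu_{-q^{-1}}(\xi)$. *)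

theory Defs
  imports "HOL-Computational_Algebra.Computational_Algebra"
begin

definition padic_val_rat :: "nat \<Rightarrow> rat \<Rightarrow> int" where
  "padic_val_rat p r = (case quotient_of r of (a, b) \<Rightarrow>
      int (multiplicity (int p) a) - int (multiplicity (int p) b))"

definition padic_abs_rat :: "nat \<Rightarrow> rat \<Rightarrow> real" where
  "padic_abs_rat p r = (if r = 0 then 0 else real p powr (- real_of_int (padic_val_rat p r)))"

definition conv_abs :: "('a::field \<Rightarrow> real) \<Rightarrow> (nat \<Rightarrow> 'a) \<Rightarrow> 'a \<Rightarrow> bool" where
  "conv_abs absv s L \<longleftrightarrow> (\<forall>e>0. \<exists>M. \<forall>N\<ge>M. absv (s N - L) < e)"

definition algebraic_over_Q :: "'a::field_char_0 \<Rightarrow> bool" where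
  "algebraic_over_Q x \<longleftrightarrow> (\<exists>P :: rat poly. P \<noteq> 0 \<and> poly (map_poly of_rat P) x = 0)"

text \<open>Up to isometric isomorphism this is exactly (C_p, |.|_p).\<close>
definition Cp_field :: "('a::field_char_0 \<Rightarrow> real) \<Rightarrow> nat \<Rightarrow> bool" where
  "Cp_field absv p \<longleftrightarrow>
     (\<forall>x. absv x \<ge> 0) \<and> (\<forall>x. absv x = 0 \<longleftrightarrow> x = 0) \<and>
     (\<forall>x y. absv (x * y) = absv x * absv y) \<and>
     (\<forall>x y. absv (x + y) \<le> max (absv x) (absv y)) \<and>
     (\<forall>r. absv (of_rat r) = padic_abs_rat p r) \<and>
     (\<forall>s. (\<forall>e>0. \<exists>M. \<forall>m\<ge>M. \<forall>k\<ge>M. absv (s m - s k) < e) \<longrightarrow> (\<exists>L. conv_abs absv s L)) \<and>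
     (\<forall>P :: 'a poly. degree P > 0 \<longrightarrow> (\<exists>x. poly P x = 0)) \<and>
     (\<forall>x e. e > 0 \<longrightarrow> (\<exists>y. algebraic_over_Q y \<and> absv (x - y) < e))"

definition qbr :: "'a::field \<Rightarrow> int \<Rightarrow> 'a" where
  "qbr Q x = (if Q = 1 then of_int x else (1 - Q powi x) / (1 - Q))"

text \<open>Fermionic p-adic q-integral; f is given by its values on the natural numbers,
  which are the only values entering the defining Riemann sums.\<close>
definition fermionic_qint :: "('a::field_char_0 \<Rightarrow> real) \<Rightarrow> nat \<Rightarrow> 'a \<Rightarrow> (nat \<Rightarrow> 'a) \<Rightarrow> 'a" where
  "fermionic_qint absv p q f = (THE L. conv_abs absv
      (\<lambda>N. (1 / qbr (- q) (int (p ^ N))) * (\<Sum>\<xi><p ^ N. f \<xi> * (- q) ^ \<xi>)) L)"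

text \<open>Gtilde absv p Q alpha h m x = \<open>G~_{m,Q}^{(alpha,h)}(x)\<close> for m \<ge> 1, i.e.
  G~_{n+1,Q}(x) = (n+1) * int q^((h-1) xi) [x+xi]_{Q^alpha}^n d mu_{-Q}(xi).
  The q^{-1}-version is obtained by taking Q = inverse q.\<close>
definition Gtilde :: "('a::field_char_0 \<Rightarrow> real) \<Rightarrow> nat \<Rightarrow> 'a \<Rightarrow> nat \<Rightarrow> nat \<Rightarrow> nat \<Rightarrow> int \<Rightarrow> 'a" where
  "Gtilde absv p Q \<alpha> h m x = of_nat m *
     fermionic_qint absv p Q (\<lambda>\<xi>. Q ^ ((h - 1) * \<xi>) * qbr (Q ^ \<alpha>) (x + int \<xi>) ^ (m - 1))"

end

theory Submission
  imports Defs
begin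

text \<open>
  Writing P = p^N, the change of variables \<xi> \<mapsto> P - 1 - \<xi> turns the Riemann sum of the
  q^{-1}-integral into a Riemann sum for the measure \<mu>_{-q}; this is the discrete form of
  \<open>\<integral> f(\<xi>) d\<mu>_{-q^{-1}}(\<xi>) = \<integral> f(-1-\<xi>) d\<mu>_{-q}(\<xi>)\<close>.  After the substitution the two
  integrands differ only through q^{-P} versus 1 and [P + x] versus [x], and both
  differences are bounded by max(1/p, |q - 1|)^N because |q^{p^N} - 1| and |p^N| decay
  geometrically.  Hence the two sequences of Riemann sums have the same limits.
\<close>

locale nonarch_abs =
  fixes absv :: "'a::field \<Rightarrow> real"
  assumes absv_nonneg: "absv x \<ge> 0"
    and absv_eq_0_iff: "absv x = 0 \<longleftrightarrow> x = 0"
    and absv_mult: "absv (x * y) = absv x * absv y"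
    and absv_add_le_max: "absv (x + y) \<le> max (absv x) (absv y)"
begin

lemma absv_0: "absv 0 = 0"
  by (simp add: absv_eq_0_iff)

lemma absv_1: "absv 1 = 1"
proof -
  have "absv 1 = absv 1 * absv 1" using absv_mult[of 1 1] by simp
  moreover have "absv 1 \<noteq> 0" by (simp add: absv_eq_0_iff)
  ultimately show ?thesis by simp
qed

lemma absv_minus: "absv (- x) = absv x"
proof -
  have "absv (-1) * absv (-1) = 1" using absv_mult[of "-1" "-1"] absv_1 by simp
  then have "absv (-1) = 1" using absv_nonneg[of "-1"] unfolding square_eq_1_iff by auto
  then show ?thesis using absv_mult[of "-1" x] by simp
qed

lemma absv_minus_commute: "absv (x - y) = absv (y - x)"
  using absv_minus[of "x - y"] by simp

lemma absv_diff_le_max: "absv (x - y) \<le> max (absv x) (absv y)"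
  using absv_add_le_max[of x "- y"] absv_minus[of y] by simp

lemma absv_diff_triangle: "absv (x - z) \<le> max (absv (x - y)) (absv (y - z))"
  using absv_add_le_max[of "x - y" "y - z"] by simp

lemma absv_inverse: "absv (inverse x) = inverse (absv x)"
proof (cases "x = 0")
  case False
  then have "absv x * absv (inverse x) = 1" using absv_mult[of x "inverse x"] absv_1 by simp
  then show ?thesis by (metis inverse_unique)
qed (simp add: absv_0)

lemma absv_divide: "absv (x / y) = absv x / absv y"
  by (simp add: divide_inverse absv_mult absv_inverse)

lemma absv_power: "absv (x ^ n) = absv x ^ n"
  by (induction n) (simp_all add: absv_1 absv_mult)

lemma absv_power_int_eq_1: "absv x = 1 \<Longrightarrow> absv (x powi k) = 1"
  by (simp add: power_int_def absv_power absv_inverse)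

lemma absv_add_dominant:
  assumes "absv y < absv x"
  shows "absv (x + y) = absv x"
proof -
  have "absv (x + y) \<le> absv x" using absv_add_le_max[of x y] assms by simp
  moreover have "absv x \<le> max (absv (x + y)) (absv y)" using absv_diff_le_max[of "x + y" y] by simp
  ultimately show ?thesis using assms by linarith
qed

lemma absv_eq_1_if_near_1: "absv (x - 1) < 1 \<Longrightarrow> absv x = 1"
  using absv_add_dominant[of "x - 1" 1] absv_1 by simp

lemma absv_of_nat_le_1: "absv (of_nat n) \<le> 1"
proof (induction n)
  case (Suc n)
  then show ?case using absv_add_le_max[of 1 "of_nat n"] absv_1 by simp
qed (simp add: absv_0)

lemma absv_of_int_le_1: "absv (of_int k) \<le> 1"
  by (metis absv_minus absv_of_nat_le_1 int_cases2 of_int_minus of_int_of_nat_eq)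

lemma absv_sum_le:
  assumes "finite S" "\<And>i. i \<in> S \<Longrightarrow> absv (f i) \<le> B" "B \<ge> 0"
  shows "absv (sum f S) \<le> B"
  using assms
proof (induction S rule: finite_induct)
  case (insert x F)
  then show ?case using absv_add_le_max[of "f x" "sum f F"] by (simp add: order_trans)
qed (simp add: absv_0)

lemma absv_power_diff_le:
  assumes "absv x \<le> 1" "absv y \<le> 1"
  shows "absv (x ^ m - y ^ m) \<le> absv (x - y)"
proof (induction m)
  case 0
  then show ?case by (simp add: absv_0 absv_nonneg)
next
  case (Suc m)
  have split: "x ^ Suc m - y ^ Suc m = x * (x ^ m - y ^ m) + y ^ m * (x - y)"
    by (simp add: algebra_simps)
  have "absv (x * (x ^ m - y ^ m)) \<le> absv (x - y)"
    using Suc assms unfolding absv_mult by (meson mult_left_le_one_le order_trans absv_nonneg)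
  moreover have "absv (y ^ m * (x - y)) \<le> absv (x - y)"
    using assms absv_nonneg unfolding absv_mult absv_power
    by (simp add: mult_left_le_one_le power_le_one)
  ultimately show ?case
    unfolding split using absv_add_le_max[of "x * (x ^ m - y ^ m)" "y ^ m * (x - y)"] by simp
qed

lemma absv_power_sub_1_le: "absv x \<le> 1 \<Longrightarrow> absv (x ^ m - 1) \<le> absv (x - 1)"
  using absv_power_diff_le[of x 1 m] absv_1 by simp

lemma absv_mult_power_diff_le:
  assumes w: "absv w = 1" and u: "absv u \<le> 1" and v: "absv v \<le> 1"
  shows "absv (w ^ k * u ^ n - v ^ n) \<le> max (absv (w - 1)) (absv (u - v))"
proof -
  have split: "w ^ k * u ^ n - v ^ n = (w ^ k - 1) * u ^ n + (u ^ n - v ^ n)"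
    by (simp add: algebra_simps)
  have "absv (u ^ n) \<le> 1"
    using u absv_nonneg by (simp add: absv_power power_le_one)
  then have "absv ((w ^ k - 1) * u ^ n) \<le> absv (w ^ k - 1)"
    unfolding absv_mult by (simp add: absv_nonneg mult_right_le_one_le)
  also have "\<dots> \<le> absv (w - 1)"
    using absv_power_sub_1_le w by simp
  finally have "absv ((w ^ k - 1) * u ^ n) \<le> absv (w - 1)" .
  moreover have "absv (u ^ n - v ^ n) \<le> absv (u - v)"
    using absv_power_diff_le u v by simp
  ultimately show ?thesis
    unfolding split using absv_add_le_max[of "(w ^ k - 1) * u ^ n" "u ^ n - v ^ n"] by auto
qed

lemma conv_abs_cong:
  assumes "\<And>e. e > 0 \<Longrightarrow> \<exists>M. \<forall>N\<ge>M. absv (s N - t N) < e"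
  shows "conv_abs absv s = conv_abs absv t"
proof -
  have transfer: "conv_abs absv u L"
    if v: "conv_abs absv v L" and uv: "\<And>e. e > 0 \<Longrightarrow> \<exists>M. \<forall>N\<ge>M. absv (u N - v N) < e"
    for u v L
    unfolding conv_abs_def
  proof (intro allI impI)
    fix e :: real
    assume "e > 0"
    then obtain M1 M2 where "\<forall>N\<ge>M1. absv (v N - L) < e" "\<forall>N\<ge>M2. absv (u N - v N) < e"
      using v uv unfolding conv_abs_def by meson
    then have "\<forall>N\<ge>max M1 M2. absv (u N - L) < e"
      using absv_diff_triangle by (meson le_less_trans max.boundedE max_less_iff_conj)
    then show "\<exists>M. \<forall>N\<ge>M. absv (u N - L) < e" ..
  qed
  show ?thesis
  proof (intro ext iffI)
    fix L
    assume "conv_abs absv t L"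
    then show "conv_abs absv s L" using transfer assms by blast
  next
    fix L
    assume "conv_abs absv s L"
    then show "conv_abs absv t L" using transfer[of s L t] assms absv_minus_commute by metis
  qed
qed

end

lemma fermionic_qint_eq_if_geometrically_close:
  fixes absv :: "'a::field_char_0 \<Rightarrow> real"
  assumes "nonarch_abs absv" and "0 \<le> c" "c < 1"
    and close: "\<And>N. absv ((1 / qbr (- q) (int (p ^ N))) * (\<Sum>\<xi><p ^ N. f \<xi> * (- q) ^ \<xi>)
                         - (1 / qbr (- q') (int (p ^ N))) * (\<Sum>\<xi><p ^ N. g \<xi> * (- q') ^ \<xi>))
                    \<le> K * c ^ N"
  shows "fermionic_qint absv p q f = fermionic_qint absv p q' g"
proof -
  interpret nonarch_abs absv by fact
  have lim: "(\<lambda>N. K * c ^ N) \<longlonglongrightarrow> 0"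
    using assms(2,3) by (intro tendsto_mult_right_zero LIMSEQ_power_zero) simp
  have "\<exists>M. \<forall>N\<ge>M. K * c ^ N < e" if "e > 0" for e
    using order_tendstoD(2)[OF lim that] by (simp add: eventually_sequentially)
  then have "\<exists>M. \<forall>N\<ge>M.
      absv ((1 / qbr (- q) (int (p ^ N))) * (\<Sum>\<xi><p ^ N. f \<xi> * (- q) ^ \<xi>)
            - (1 / qbr (- q') (int (p ^ N))) * (\<Sum>\<xi><p ^ N. g \<xi> * (- q') ^ \<xi>)) < e"
    if "e > 0" for e
    using close that by (meson le_less_trans)
  then show ?thesis
    unfolding fermionic_qint_def by (subst conv_abs_cong) auto
qed

lemma qbr_neg_odd:
  fixes q :: "'a::field"
  assumes "q \<noteq> -1" and "odd P"
  shows "qbr (- q) (int P) = (1 + q ^ P) / (1 + q)"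
proof -
  have "- q \<noteq> 1" using assms(1) by (metis minus_equation_iff)
  then show ?thesis using assms(2) by (simp add: qbr_def power_int_of_nat power_minus_odd)
qed

lemma qbr_neg_inverse_odd:
  fixes q :: "'a::field"
  assumes q0: "q \<noteq> 0" and q1: "q \<noteq> -1" and P: "odd P"
  shows "qbr (- inverse q) (int P) = qbr (- q) (int P) / q ^ (P - 1)"
proof -
  have "inverse q \<noteq> -1" using q1 by (metis inverse_minus_eq inverse_1 inverse_inverse_eq)
  then have "qbr (- inverse q) (int P) = (1 + inverse q ^ P) / (1 + inverse q)"
    using P by (rule qbr_neg_odd)
  also have "\<dots> = (1 + q ^ P) / (1 + q) / q ^ (P - 1)"
  proof -
    have "1 + q \<noteq> 0" using q1 by (metis add.commute add_eq_0_iff)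
    moreover have "1 + inverse q ^ P = (q ^ P + 1) / q ^ P" "1 + inverse q = (q + 1) / q"
      using q0 by (simp_all add: power_one_over add_divide_distrib inverse_eq_divide)
    moreover have "q ^ P = q * q ^ (P - 1)" using P by (cases P) auto
    ultimately show ?thesis using q0 by (simp add: add.commute mult.commute)
  qed
  also have "\<dots> = qbr (- q) (int P) / q ^ (P - 1)"
    using q1 P by (simp add: qbr_neg_odd)
  finally show ?thesis .
qed

lemma fermionic_sum_inverse_reflect:
  fixes q :: "'a::field"
  assumes q0: "q \<noteq> 0" and q1: "q \<noteq> -1" and P: "odd P"
  shows "(1 / qbr (- inverse q) (int P)) * (\<Sum>\<xi><P. f \<xi> * (- inverse q) ^ \<xi>)
       = (1 / qbr (- q) (int P)) * (\<Sum>\<eta><P. f (P - 1 - \<eta>) * (- q) ^ \<eta>)"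
proof -
  have reflect: "(- inverse q) ^ (P - Suc \<eta>) = (- q) ^ \<eta> / q ^ (P - 1)" if "\<eta> < P" for \<eta>
  proof -
    define d where "d = P - Suc \<eta>"
    have Pd: "P - 1 = \<eta> + d" using that d_def by simp
    then have "even (\<eta> + d)" using P that by (metis Suc_diff_1 even_Suc gr_implies_not0 neq0_conv)
    then have sign: "(-1::'a) ^ d = (-1) ^ \<eta>" by (auto simp: minus_one_power_iff)
    have "(- inverse q) ^ d = (-1) ^ d / q ^ d"
      unfolding power_minus[of "inverse q"] power_inverse divide_inverse ..
    also have "\<dots> = (-1) ^ \<eta> * q ^ \<eta> / q ^ (\<eta> + d)" using q0 sign by (simp add: power_add)
    also have "\<dots> = (- q) ^ \<eta> / q ^ (P - 1)" using Pd by (simp add: power_minus')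
    finally show ?thesis using d_def by simp
  qed
  have "(\<Sum>\<xi><P. f \<xi> * (- inverse q) ^ \<xi>)
      = (\<Sum>\<eta><P. f (P - Suc \<eta>) * (- inverse q) ^ (P - Suc \<eta>))"
    by (rule sum.nat_diff_reindex[symmetric])
  also have "\<dots> = (\<Sum>\<eta><P. f (P - 1 - \<eta>) * (- q) ^ \<eta>) / q ^ (P - 1)"
    by (simp add: sum_divide_distrib reflect del: diff_Suc_1)
  finally show ?thesis using qbr_neg_inverse_odd[OF q0 q1 P] q0 by simp
qed

context nonarch_abs
begin

lemma neq_minus_1_if_near_1:
  assumes "absv (q - 1) < 1" and "absv 2 = 1"
  shows "q \<noteq> -1"
proof
  assume "q = -1"
  then have "absv (q - 1) = absv (- 2)" by simp
  then show False using assms absv_minus[of 2] by linarith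
qed

lemma absv_inverse_qbr_neg_odd_le_1:
  assumes q: "absv (q - 1) < 1" and two: "absv 2 = 1" and P: "odd P"
  shows "absv (1 / qbr (- q) (int P)) \<le> 1"
proof -
  have "absv q = 1" using absv_eq_1_if_near_1 q .
  then have "absv (q ^ P - 1) < 1" using absv_power_sub_1_le[of q P] q by simp
  then have "absv (1 + q ^ P) = 1" using absv_add_dominant[of "q ^ P - 1" 2] two by simp
  moreover have "absv (1 + q) \<le> 1" using absv_add_le_max[of 1 q] absv_1 \<open>absv q = 1\<close> by simp
  ultimately show ?thesis
    using qbr_neg_odd[OF neq_minus_1_if_near_1[OF q two] P] by (simp add: absv_divide)
qed

lemma absv_fermionic_sum_diff_le:
  assumes q: "absv (q - 1) < 1" and two: "absv 2 = 1" and P: "odd P"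
    and fg: "\<And>\<xi>. \<xi> < P \<Longrightarrow> absv (f \<xi> - g \<xi>) \<le> B"
  shows "absv ((1 / qbr (- q) (int P)) * (\<Sum>\<xi><P. f \<xi> * (- q) ^ \<xi>)
              - (1 / qbr (- q) (int P)) * (\<Sum>\<xi><P. g \<xi> * (- q) ^ \<xi>)) \<le> B"
proof -
  have "absv q = 1" using absv_eq_1_if_near_1 q .
  have "B \<ge> 0" using fg[of 0] P absv_nonneg by (meson odd_pos order_trans)
  then have sum: "absv (\<Sum>\<xi><P. (f \<xi> - g \<xi>) * (- q) ^ \<xi>) \<le> B"
    using fg \<open>absv q = 1\<close> by (intro absv_sum_le) (simp_all add: absv_mult absv_power absv_minus)
  have "absv ((1 / qbr (- q) (int P)) * (\<Sum>\<xi><P. (f \<xi> - g \<xi>) * (- q) ^ \<xi>)) \<le> 1 * B"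
    unfolding absv_mult
    by (rule mult_mono[OF absv_inverse_qbr_neg_odd_le_1[OF q two P] sum]) (simp_all add: absv_nonneg)
  moreover have "(\<Sum>\<xi><P. f \<xi> * (- q) ^ \<xi>) - (\<Sum>\<xi><P. g \<xi> * (- q) ^ \<xi>)
      = (\<Sum>\<xi><P. (f \<xi> - g \<xi>) * (- q) ^ \<xi>)"
    unfolding sum_subtractf[symmetric] left_diff_distrib ..
  ultimately show ?thesis
    by (simp only: right_diff_distrib[symmetric] mult_1)
qed

lemma absv_shifted_qbr_power_diff_le:
  assumes b: "absv b = 1" and w: "absv w = 1" and bw: "b ^ P = w ^ \<alpha>"
  shows "absv (w ^ k * qbr b (int P + x) ^ n - qbr b x ^ n)
         \<le> max 1 (absv (1 / (1 - b)) ^ n) * max (absv (w - 1)) (absv (of_nat P))"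
    (is "_ \<le> ?K * ?M")
proof -
  have "?K \<ge> 1" by simp
  moreover have "?M \<ge> 0" by (simp add: absv_nonneg le_max_iff_disj)
  ultimately have M_le: "?M \<le> ?K * ?M" using mult_right_mono[of 1 ?K ?M] by simp
  show ?thesis
  proof (cases "b = 1")
    case True
    then have "absv (w ^ k * qbr b (int P + x) ^ n - qbr b x ^ n) \<le> ?M"
      using absv_mult_power_diff_le[OF w absv_of_int_le_1 absv_of_int_le_1, of k "int P + x" n x]
      by (simp add: qbr_def)
    then show ?thesis using M_le by linarith
  next
    case False
    define c where "c = b powi x"
    define D where "D = 1 / (1 - b)"
    have c: "absv c = 1" unfolding c_def using b by (rule absv_power_int_eq_1)
    have "b \<noteq> 0" using b absv_0 by auto
    then have "b powi (int P + x) = w ^ \<alpha> * c"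
      unfolding c_def bw[symmetric] by (simp add: power_int_add power_int_of_nat)
    then have qbr_shift: "qbr b (int P + x) = D * (1 - w ^ \<alpha> * c)" and qbr: "qbr b x = D * (1 - c)"
      unfolding qbr_def D_def c_def using False by simp_all
    have u: "absv (1 - w ^ \<alpha> * c) \<le> 1"
      using absv_diff_le_max[of 1 "w ^ \<alpha> * c"] absv_1 c w by (simp add: absv_mult absv_power)
    have v: "absv (1 - c) \<le> 1" using absv_diff_le_max[of 1 c] absv_1 c by simp
    have "(1 - w ^ \<alpha> * c) - (1 - c) = - (c * (w ^ \<alpha> - 1))"
      by (simp add: algebra_simps)
    then have "absv ((1 - w ^ \<alpha> * c) - (1 - c)) = absv (w ^ \<alpha> - 1)"
      using c by (simp add: absv_minus absv_mult)
    also have "\<dots> \<le> absv (w - 1)" using absv_power_sub_1_le w by simp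
    finally have uv: "absv ((1 - w ^ \<alpha> * c) - (1 - c)) \<le> absv (w - 1)" .
    have "w ^ k * qbr b (int P + x) ^ n - qbr b x ^ n
        = D ^ n * (w ^ k * (1 - w ^ \<alpha> * c) ^ n - (1 - c) ^ n)"
      unfolding qbr_shift qbr power_mult_distrib by (simp add: algebra_simps)
    then have "absv (w ^ k * qbr b (int P + x) ^ n - qbr b x ^ n)
        = absv D ^ n * absv (w ^ k * (1 - w ^ \<alpha> * c) ^ n - (1 - c) ^ n)"
      by (simp add: absv_mult absv_power)
    also have "\<dots> \<le> absv D ^ n * absv (w - 1)"
      using absv_mult_power_diff_le[OF w u v, of k n] uv
      by (intro mult_left_mono) (auto simp: absv_nonneg)
    also have "\<dots> \<le> ?K * ?M"
      by (rule mult_mono) (simp_all add: D_def absv_nonneg)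
    finally show ?thesis .
  qed
qed

lemma absv_Genocchi_integrand_reflect_diff_le:
  assumes q: "absv q = 1" and \<eta>: "\<eta> < P"
  shows "absv (q ^ ((h - 1) * (\<eta> + 1)) * qbr (inverse q ^ \<alpha>) (1 - int \<eta>) ^ n
           - inverse q ^ ((h - 1) * (P - 1 - \<eta>)) * qbr (inverse q ^ \<alpha>) (2 + int (P - 1 - \<eta>)) ^ n)
         \<le> max 1 (absv (1 / (1 - inverse q ^ \<alpha>)) ^ n)
            * max (absv (inverse q ^ P - 1)) (absv (of_nat P))"
proof -
  define k where "k = h - 1"
  define b where "b = inverse q ^ \<alpha>"
  define w where "w = inverse q ^ P"
  define x where "x = 1 - int \<eta>"
  have q0: "q \<noteq> 0" using q absv_0 by auto
  have "P = (P - 1 - \<eta>) + (\<eta> + 1)"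
    using \<eta> by simp
  then have "k * P = k * (P - 1 - \<eta>) + k * (\<eta> + 1)"
    by (metis add_mult_distrib2)
  then have "inverse q ^ (k * (P - 1 - \<eta>)) = w ^ k * q ^ (k * (\<eta> + 1))"
    using q0 by (simp add: w_def power_mult[symmetric] mult.commute power_add power_inverse
        field_simps)
  moreover have "2 + int (P - 1 - \<eta>) = int P + x"
    unfolding x_def using \<eta> by linarith
  ultimately have "q ^ ((h - 1) * (\<eta> + 1)) * qbr b (1 - int \<eta>) ^ n
        - inverse q ^ ((h - 1) * (P - 1 - \<eta>)) * qbr b (2 + int (P - 1 - \<eta>)) ^ n
      = - (q ^ (k * (\<eta> + 1)) * (w ^ k * qbr b (int P + x) ^ n - qbr b x ^ n))"
    unfolding k_def x_def by (simp add: algebra_simps)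
  then have "absv (q ^ ((h - 1) * (\<eta> + 1)) * qbr b (1 - int \<eta>) ^ n
        - inverse q ^ ((h - 1) * (P - 1 - \<eta>)) * qbr b (2 + int (P - 1 - \<eta>)) ^ n)
      = absv (w ^ k * qbr b (int P + x) ^ n - qbr b x ^ n)"
    using q by (simp add: absv_minus absv_mult absv_power)
  also have "\<dots> \<le> max 1 (absv (1 / (1 - b)) ^ n) * max (absv (w - 1)) (absv (of_nat P))"
    by (rule absv_shifted_qbr_power_diff_le)
      (simp_all add: q b_def w_def absv_power absv_inverse power_mult[symmetric] mult.commute)
  finally show ?thesis unfolding b_def w_def .
qed

end

locale padic_abs = nonarch_abs absv for absv :: "'a::field \<Rightarrow> real" +
  fixes p :: nat
  assumes p_gt_1: "p > 1"
    and absv_of_nat_p: "absv (of_nat p) = 1 / real p"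

lemma padic_abs_if_Cp_field:
  assumes "prime p" and "Cp_field absv p"
  shows "padic_abs absv p"
proof -
  interpret nonarch_abs absv
    using assms(2) unfolding Cp_field_def by unfold_locales blast+
  have p: "p > 1" using assms(1) prime_gt_1_nat by blast
  have "multiplicity (int p) (int p) = 1"
    using p by (intro multiplicity_self) auto
  then have "padic_abs_rat p (of_nat p) = 1 / real p"
    using p by (simp add: padic_abs_rat_def padic_val_rat_def powr_minus_divide)
  moreover have "absv (of_nat p) = padic_abs_rat p (of_nat p)"
    using assms(2) unfolding Cp_field_def by (metis of_rat_of_nat_eq)
  ultimately show ?thesis
    using p by unfold_locales simp_all
qed

context padic_abs
begin

lemma inverse_p_lt_1: "1 / real p < 1"
  using p_gt_1 by simp

lemma absv_power_p_sub_1_le: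
  assumes "absv x \<le> 1"
  shows "absv (x ^ p - 1) \<le> max (1 / real p) (absv (x - 1)) * absv (x - 1)"
proof -
  have "x ^ p - 1 = (x - 1) * (\<Sum>i<p. x ^ i)" by (rule power_diff_1_eq)
  also have "(\<Sum>i<p. x ^ i) = of_nat p + (\<Sum>i<p. x ^ i - 1)" by (simp add: sum_subtractf)
  finally have factor: "x ^ p - 1 = (x - 1) * (of_nat p + (\<Sum>i<p. x ^ i - 1))" .
  have "absv (\<Sum>i<p. x ^ i - 1) \<le> absv (x - 1)"
    using assms absv_power_sub_1_le absv_nonneg by (intro absv_sum_le) auto
  then have "absv (of_nat p + (\<Sum>i<p. x ^ i - 1)) \<le> max (1 / real p) (absv (x - 1))"
    using absv_add_le_max[of "of_nat p" "\<Sum>i<p. x ^ i - 1"] absv_of_nat_p by simp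
  then show ?thesis
    unfolding factor absv_mult using absv_nonneg[of "x - 1"] by (metis mult.commute mult_left_mono)
qed

lemma absv_power_p_power_sub_1_le:
  assumes "absv (q - 1) < 1"
  shows "absv (q ^ (p ^ N) - 1) \<le> max (1 / real p) (absv (q - 1)) ^ N * absv (q - 1)"
proof (induction N)
  case (Suc N)
  define c where "c = max (1 / real p) (absv (q - 1))"
  have q: "absv q = 1" using absv_eq_1_if_near_1 assms by simp
  then have "absv (q ^ (p ^ N)) \<le> 1" "absv (q ^ (p ^ N) - 1) \<le> absv (q - 1)"
    using absv_power_sub_1_le by (simp_all add: absv_power)
  then have "absv ((q ^ (p ^ N)) ^ p - 1) \<le> c * absv (q ^ (p ^ N) - 1)"
    using absv_power_p_sub_1_le unfolding c_def
    by (meson absv_nonneg dual_order.trans max.mono mult_right_mono order_refl)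
  also have "\<dots> \<le> c * (c ^ N * absv (q - 1))"
    using Suc by (intro mult_left_mono) (auto simp: c_def le_max_iff_disj)
  finally show ?case
    by (simp add: c_def power_mult[symmetric] mult.commute mult.left_commute)
qed simp

lemma absv_2:
  assumes "odd p"
  shows "absv 2 = 1"
proof -
  obtain k where k: "p = 2 * k + 1" using assms oddE by blast
  have "(1::'a) = of_nat p + - (2 * of_nat k)" using k by simp
  then have "absv (1::'a) \<le> max (absv (of_nat p)) (absv (2 * of_nat k))"
    using absv_add_le_max[of "of_nat p" "- (2 * of_nat k)"] absv_minus by metis
  also have "absv (2 * of_nat k :: 'a) \<le> absv 2"
    using absv_of_nat_le_1[of k] absv_nonneg[of 2] by (simp add: absv_mult mult_left_le)
  finally have "1 \<le> max (1 / real p) (absv (2::'a))" using absv_1 absv_of_nat_p by simp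
  then have "absv (2::'a) \<ge> 1" using inverse_p_lt_1 by linarith
  moreover have "absv (2::'a) \<le> 1" using absv_of_nat_le_1[of 2] by simp
  ultimately show ?thesis by simp
qed

lemma absv_inverse_power_p_power_sub_1_le:
  assumes q: "absv (q - 1) < 1"
  shows "absv (inverse q ^ (p ^ N) - 1) \<le> max (1 / real p) (absv (q - 1)) ^ N"
proof -
  define c where "c = max (1 / real p) (absv (q - 1))"
  have "absv q = 1" using absv_eq_1_if_near_1 q .
  then have "q \<noteq> 0" using absv_0 by auto
  then have "inverse q ^ (p ^ N) - 1 = - ((q ^ (p ^ N) - 1) * inverse q ^ (p ^ N))"
    by (simp add: power_inverse algebra_simps)
  then have "absv (inverse q ^ (p ^ N) - 1) = absv (q ^ (p ^ N) - 1)"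
    using \<open>absv q = 1\<close> by (simp add: absv_minus absv_mult absv_power absv_inverse)
  also have "\<dots> \<le> c ^ N * absv (q - 1)"
    unfolding c_def by (rule absv_power_p_power_sub_1_le[OF q])
  also have "\<dots> \<le> c ^ N"
    using q by (intro mult_left_le) (auto simp: c_def absv_nonneg le_max_iff_disj)
  finally show ?thesis unfolding c_def .
qed

lemma absv_of_nat_p_power_le: "absv (of_nat (p ^ N)) \<le> max (1 / real p) t ^ N"
proof -
  have "absv (of_nat (p ^ N)) = (1 / real p) ^ N"
    unfolding of_nat_power absv_power absv_of_nat_p ..
  also have "\<dots> \<le> max (1 / real p) t ^ N"
    by (intro power_mono) auto
  finally show ?thesis .
qed

lemma absv_Genocchi_fermionic_sum_diff_le:
  assumes q: "absv (q - 1) < 1" and p: "odd p"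
  shows "absv ((1 / qbr (- q) (int (p ^ N))) *
            (\<Sum>\<xi><p ^ N. q ^ ((h - 1) * (\<xi> + 1)) * qbr (inverse q ^ \<alpha>) (1 - int \<xi>) ^ n * (- q) ^ \<xi>)
          - (1 / qbr (- inverse q) (int (p ^ N))) *
            (\<Sum>\<xi><p ^ N. inverse q ^ ((h - 1) * \<xi>) * qbr (inverse q ^ \<alpha>) (2 + int \<xi>) ^ n
                           * (- inverse q) ^ \<xi>))
         \<le> max 1 (absv (1 / (1 - inverse q ^ \<alpha>)) ^ n) * max (1 / real p) (absv (q - 1)) ^ N"
proof -
  define P where "P = p ^ N"
  define K where "K = max 1 (absv (1 / (1 - inverse q ^ \<alpha>)) ^ n)"
  define c where "c = max (1 / real p) (absv (q - 1))"
  define f where "f = (\<lambda>\<xi>. q ^ ((h - 1) * (\<xi> + 1)) * qbr (inverse q ^ \<alpha>) (1 - int \<xi>) ^ n)"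
  define g where "g = (\<lambda>\<xi>. inverse q ^ ((h - 1) * \<xi>) * qbr (inverse q ^ \<alpha>) (2 + int \<xi>) ^ n)"
  have q1: "absv q = 1" using absv_eq_1_if_near_1 q .
  then have q0: "q \<noteq> 0" using absv_0 by auto
  have two: "absv 2 = 1" using absv_2 p .
  have P: "odd P" unfolding P_def using p by simp
  have bound: "max (absv (inverse q ^ P - 1)) (absv (of_nat P)) \<le> c ^ N"
    unfolding P_def c_def using absv_inverse_power_p_power_sub_1_le[OF q] absv_of_nat_p_power_le
    by simp
  have terms: "absv (f \<eta> - g (P - 1 - \<eta>)) \<le> K * c ^ N" if "\<eta> < P" for \<eta>
  proof -
    have "absv (f \<eta> - g (P - 1 - \<eta>)) \<le> K * max (absv (inverse q ^ P - 1)) (absv (of_nat P))"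
      unfolding f_def g_def K_def by (rule absv_Genocchi_integrand_reflect_diff_le[OF q1 that])
    also have "\<dots> \<le> K * c ^ N"
      using bound by (intro mult_left_mono) (simp_all add: K_def)
    finally show ?thesis .
  qed
  have "absv ((1 / qbr (- q) (int P)) * (\<Sum>\<xi><P. f \<xi> * (- q) ^ \<xi>)
            - (1 / qbr (- inverse q) (int P)) * (\<Sum>\<xi><P. g \<xi> * (- inverse q) ^ \<xi>)) \<le> K * c ^ N"
    unfolding fermionic_sum_inverse_reflect[OF q0 neq_minus_1_if_near_1[OF q two] P]
    using terms by (intro absv_fermionic_sum_diff_le[OF q two P])
  then show ?thesis
    unfolding P_def K_def c_def f_def g_def by (simp add: mult.assoc)
qed

end

theorem mainTheorem4:
  fixes absv :: "'a::field_char_0 \<Rightarrow> real" and p :: nat and q :: 'a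
    and \<alpha> h n :: nat
  assumes "prime p" and "odd p" and "Cp_field absv p"
    and "absv (q - 1) < 1" and "h \<ge> 1"
  shows "fermionic_qint absv p q
           (\<lambda>\<xi>. q ^ ((h - 1) * (\<xi> + 1)) * qbr (inverse q ^ \<alpha>) (1 - int \<xi>) ^ n)
         = Gtilde absv p (inverse q) \<alpha> h (n + 1) 2 / of_nat (n + 1)"
proof -
  interpret padic_abs absv p
    using padic_abs_if_Cp_field assms(1,3) .
  have RHS: "Gtilde absv p (inverse q) \<alpha> h (n + 1) 2 / of_nat (n + 1)
      = fermionic_qint absv p (inverse q)
          (\<lambda>\<xi>. inverse q ^ ((h - 1) * \<xi>) * qbr (inverse q ^ \<alpha>) (2 + int \<xi>) ^ n)"
    unfolding Gtilde_def by (simp add: of_nat_neq_0 flip: of_nat_Suc)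
  have "0 \<le> max (1 / real p) (absv (q - 1))" "max (1 / real p) (absv (q - 1)) < 1"
    using assms(4) inverse_p_lt_1 by (auto simp: le_max_iff_disj)
  then show ?thesis
    unfolding RHS
    by (rule fermionic_qint_eq_if_geometrically_close[OF nonarch_abs_axioms])
      (rule absv_Genocchi_fermionic_sum_diff_le[OF assms(4,2)])
qed

end
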